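(* Consider the coupled SIS epidemic and evolutionary behavioral dynamics $$\dot y = \big[(1-y)(z_S+\alpha(1-z_S))(\beta_u z_I+\beta_p(1-z_I))-\gamma\big]y,$$ $$\dot z_S = z_S(1-z_S)\big[c_P - L(1-\alpha)(\beta_u z_I+\beta_p(1-z_I))\,y\big],$$ $$\dot z_I = z_I(1-z_I)(c_{\mathtt{IP}}-c_{\mathtt{IU}}),$$ on $[0,1]^3$. Define $$y^*_u := 1-\frac{\gamma}{\beta_p},\quad y^*_{\mathrm{int}} := \frac{c_P}{L(1-\alpha)\beta_p},\quad y^*_p := 1-\frac{\gamma}{\alpha\beta_p},\quad z^*_{S,\mathrm{int}} := \frac{1}{1-\alpha}\left[\frac{\gamma}{\beta_p(1-y^*_{\mathrm{int}})}-\alpha\right],$$ and the candidate equilibria (with $z_I=0$) $\mathbf{E0}=(0,0,0)$, $\mathbf{E1}=(0,1,0)$, $\mathbf{E2}=(y^*_u,1,0)$, $\mathbf{E3}=(y^*_{\mathrm{int}},z^*_{S,\mathrm{int}},0)$, $\mathbf{E4}=(y^*_p,0,0)$. Then: (1) $\mathbf{E0}$ is an equilibrium for all parameter values and is unstable; (2) $\mathbf{E1}$ is an equilibrium for all parameter values; it is stable if $\beta_p<\gamma$ and unstable if $\beta_p>\gamma$; (3) $\mathbf{E2}$ is an equilibrium in $[0,1]^3$ (with $y>0$) only when $\beta_p>\gamma$; it is stable when $y^*_u<y^*_{\mathrm{int}}$ and unstable when $y^*_u>y^*_{\mathrm{int}}$; (4) $\mathbf{E3}$ is an equilibrium with $y^*_{\mathrm{int}}\in(0,1)$,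 $z^*_{S,\mathrm{int}}\in(0,1)$ only when $y^*_p<y^*_{\mathrm{int}}<y^*_u$, and then it is stable; (5) $\mathbf{E4}$ is an equilibrium with $y^*_p\in(0,1)$ only when $\gamma<\alpha\beta_p$; it is stable when $y^*_p>y^*_{\mathrm{int}}$ and unstable when $y^*_p<y^*_{\mathrm{int}}$.
   Context: Parameters: $\alpha\in(0,1)$, $\beta_u>\beta_p>0$, $\gamma>0$, $c_P>0$, $L>0$, $c_{\mathtt{IU}}>c_{\mathtt{IP}}\ge 0$. Here $y$ is the infected fraction, $z_S$ the unprotected fraction among susceptibles, $z_I$ the unprotected fraction among infected. "Stable" means locally exponentially stable (all eigenvalues of the Jacobian of the vector field at the equilibrium have negative real part); "unstable" means the Jacobian has an eigenvalue with positive real part. *)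

theory Defs
  imports "HOL-Analysis.Analysis"
begin

text \<open>Points of R^3 are of type real^3; coordinate 1 = y, 2 = z_S, 3 = z_I.\<close>

definition vec3 :: "real \<Rightarrow> real \<Rightarrow> real \<Rightarrow> real^3" where
  "vec3 a b c = (\<chi> i. if i = 1 then a else if i = 2 then b else c)"

definition sis_field ::
  "real \<Rightarrow> real \<Rightarrow> real \<Rightarrow> real \<Rightarrow> real \<Rightarrow> real \<Rightarrow> real \<Rightarrow> real \<Rightarrow> real^3 \<Rightarrow> real^3" where
  "sis_field \<alpha> \<beta>u \<beta>p \<gamma> cP L cIU cIP x =
     (let y = x $ 1; zS = x $ 2; zI = x $ 3;
          \<beta> = \<beta>u * zI + \<beta>p * (1 - zI) in
      vec3 (((1 - y) * (zS + \<alpha> * (1 - zS)) * \<beta> - \<gamma>) * y)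
           (zS * (1 - zS) * (cP - L * (1 - \<alpha>) * \<beta> * y))
           (zI * (1 - zI) * (cIP - cIU)))"

definition equilibrium :: "(real^3 \<Rightarrow> real^3) \<Rightarrow> real^3 \<Rightarrow> bool" where
  "equilibrium f p \<longleftrightarrow> f p = 0"

definition cpx_eigenvalue :: "real^'n^'n \<Rightarrow> complex \<Rightarrow> bool" where
  "cpx_eigenvalue A \<mu> \<longleftrightarrow>
     det ((\<chi> i j. (if i = j then \<mu> else 0) - complex_of_real (A $ i $ j)) :: complex^'n^'n) = 0"

definition lin_stable :: "(real^3 \<Rightarrow> real^3) \<Rightarrow> real^3 \<Rightarrow> bool" where
  "lin_stable f p \<longleftrightarrow> (\<forall>\<mu>. cpx_eigenvalue (jacobian f (at p)) \<mu> \<longrightarrow> Re \<mu> < 0)"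

definition lin_unstable :: "(real^3 \<Rightarrow> real^3) \<Rightarrow> real^3 \<Rightarrow> bool" where
  "lin_unstable f p \<longleftrightarrow> (\<exists>\<mu>. cpx_eigenvalue (jacobian f (at p)) \<mu> \<and> Re \<mu> > 0)"

end

theory Submission
  imports Defs
begin

text \<open>On the invariant plane z_I = 0 the third row of the Jacobian is (0, 0, c_IP - c_IU) with
  c_IP < c_IU, so the spectrum is one negative eigenvalue together with the eigenvalues of the
  (y, z_S) block. At the boundary equilibria (z_S = 0 or 1) this block is triangular, and the signs
  of its diagonal entries come from comparing y_u and y_p with y_int. At the interior equilibrium
  the z_S diagonal entry vanishes while the trace and the off-diagonal product are negative, so
  the Routh-Hurwitz conditions for the block hold.\<close>

lemma vec3_nth [simp]: "vec3 a b c $ 1 = a" "vec3 a b c $ 2 = b" "vec3 a b c $ 3 = c"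
  by (simp_all add: vec3_def)

lemma vec3_eq_0_iff [simp]: "vec3 a b c = 0 \<longleftrightarrow> a = 0 \<and> b = 0 \<and> c = 0"
  by (simp add: vec_eq_iff forall_3)

lemma has_derivative_vec3:
  assumes "(f1 has_derivative f1') F" "(f2 has_derivative f2') F" "(f3 has_derivative f3') F"
  shows "((\<lambda>x. vec3 (f1 x) (f2 x) (f3 x)) has_derivative (\<lambda>h. vec3 (f1' h) (f2' h) (f3' h))) F"
proof -
  have vec3_axis: "vec3 a b c = a *\<^sub>R axis 1 1 + b *\<^sub>R axis 2 1 + c *\<^sub>R axis 3 1" for a b c
    by (simp add: vec_eq_iff forall_3 axis_def)
  show ?thesis
    unfolding vec3_axis by (intro has_derivative_add has_derivative_scaleR_left assms)
qed

lemma has_derivative_vec_nth: "((\<lambda>x::real^'n. x $ i) has_derivative (\<lambda>h. h $ i)) F"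
  by (rule bounded_linear_imp_has_derivative) (rule bounded_linear_vec_nth)

definition sis_field_deriv ::
  "real \<Rightarrow> real \<Rightarrow> real \<Rightarrow> real \<Rightarrow> real \<Rightarrow> real \<Rightarrow> real \<Rightarrow> real \<Rightarrow> real^3 \<Rightarrow> real^3 \<Rightarrow> real^3" where
  "sis_field_deriv \<alpha> \<beta>u \<beta>p \<gamma> cP L cIU cIP x h =
     (let y = x $ 1; zS = x $ 2; zI = x $ 3;
          \<beta> = \<beta>u * zI + \<beta>p * (1 - zI); s = zS + \<alpha> * (1 - zS) in
      vec3 (((1 - y) * s * \<beta> - \<gamma> - s * \<beta> * y) * h $ 1 + (1 - y) * (1 - \<alpha>) * \<beta> * y * h $ 2
              + (1 - y) * s * (\<beta>u - \<beta>p) * y * h $ 3)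
           (- zS * (1 - zS) * L * (1 - \<alpha>) * \<beta> * h $ 1
              + (1 - 2 * zS) * (cP - L * (1 - \<alpha>) * \<beta> * y) * h $ 2
              - zS * (1 - zS) * L * (1 - \<alpha>) * (\<beta>u - \<beta>p) * y * h $ 3)
           ((1 - 2 * zI) * (cIP - cIU) * h $ 3))"

lemma has_derivative_sis_field:
  "(sis_field \<alpha> \<beta>u \<beta>p \<gamma> cP L cIU cIP has_derivative sis_field_deriv \<alpha> \<beta>u \<beta>p \<gamma> cP L cIU cIP x) (at x)"
  unfolding sis_field_def sis_field_deriv_def Let_def
  by (rule has_derivative_vec3)
     (auto intro!: derivative_eq_intros has_derivative_vec_nth simp: algebra_simps)

lemma jacobian_sis_field_plane:
  fixes \<alpha> \<beta>u \<beta>p \<gamma> cP L cIU cIP y z :: real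
  defines "J \<equiv> jacobian (sis_field \<alpha> \<beta>u \<beta>p \<gamma> cP L cIU cIP) (at (vec3 y z 0))"
  shows "J $ 1 $ 1 = (1 - y) * (z + \<alpha> * (1 - z)) * \<beta>p - \<gamma> - (z + \<alpha> * (1 - z)) * \<beta>p * y"
    and "J $ 1 $ 2 = (1 - y) * (1 - \<alpha>) * \<beta>p * y"
    and "J $ 2 $ 1 = - z * (1 - z) * L * (1 - \<alpha>) * \<beta>p"
    and "J $ 2 $ 2 = (1 - 2 * z) * (cP - L * (1 - \<alpha>) * \<beta>p * y)"
    and "J $ 3 $ 1 = 0" and "J $ 3 $ 2 = 0" and "J $ 3 $ 3 = cIP - cIU"
  unfolding J_def jacobian_def frechet_derivative_at[OF has_derivative_sis_field, symmetric]
  by (simp_all add: matrix_def sis_field_deriv_def Let_def axis_def)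

lemma cpx_eigenvalue_block_3:
  fixes A :: "real^3^3"
  assumes "A $ 3 $ 1 = 0" "A $ 3 $ 2 = 0"
  shows "cpx_eigenvalue A \<mu> \<longleftrightarrow>
    (\<mu> - of_real (A $ 3 $ 3)) *
      ((\<mu> - of_real (A $ 1 $ 1)) * (\<mu> - of_real (A $ 2 $ 2)) - of_real (A $ 1 $ 2 * A $ 2 $ 1)) = 0"
  unfolding cpx_eigenvalue_def det_3 using assms by (simp add: algebra_simps)

lemma Re_neg_if_quadratic_root:
  fixes \<mu> :: complex and p q :: real
  assumes "0 < p" "0 < q" "\<mu> * \<mu> + of_real p * \<mu> + of_real q = 0"
  shows "Re \<mu> < 0"
proof -
  obtain x w where \<mu>: "\<mu> = Complex x w" by (cases \<mu>)
  from assms(3) have re: "x * x - w * w + p * x + q = 0" and im: "(2 * x + p) * w = 0"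
    unfolding \<mu> complex_eq_iff by (simp_all add: algebra_simps)
  show ?thesis
  proof (cases "w = 0")
    case True
    with re have "x * (x + p) = - q" by (simp add: algebra_simps)
    with assms(1,2) show ?thesis unfolding \<mu>
      by (smt (verit) complex.sel(1) mult_nonneg_nonneg)
  next
    case False
    with im have "2 * x + p = 0" by simp
    with assms(1) show ?thesis unfolding \<mu> by simp
  qed
qed

lemma lin_stable_block_3:
  fixes f :: "real^3 \<Rightarrow> real^3" and p :: "real^3"
  defines "J \<equiv> jacobian f (at p)"
  assumes "J $ 3 $ 1 = 0" "J $ 3 $ 2 = 0" "J $ 3 $ 3 < 0"
    and "J $ 1 $ 1 + J $ 2 $ 2 < 0" "J $ 1 $ 1 * J $ 2 $ 2 - J $ 1 $ 2 * J $ 2 $ 1 > 0"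
  shows "lin_stable f p"
  unfolding lin_stable_def
proof (intro allI impI)
  fix \<mu> :: complex
  assume "cpx_eigenvalue (jacobian f (at p)) \<mu>"
  then consider "\<mu> = of_real (J $ 3 $ 3)"
    | "\<mu> * \<mu> + of_real (- (J $ 1 $ 1 + J $ 2 $ 2)) * \<mu>
         + of_real (J $ 1 $ 1 * J $ 2 $ 2 - J $ 1 $ 2 * J $ 2 $ 1) = 0"
    unfolding J_def[symmetric] cpx_eigenvalue_block_3[OF assms(2,3)] mult_eq_0_iff
    by (fastforce simp: algebra_simps)
  then show "Re \<mu> < 0"
  proof cases
    case 1
    with assms(4) show ?thesis by simp
  next
    case 2
    show ?thesis using Re_neg_if_quadratic_root[OF _ _ 2] assms(5,6) by simp
  qed
qed

lemma lin_stable_block_3_triangular: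
  fixes f :: "real^3 \<Rightarrow> real^3" and p :: "real^3"
  defines "J \<equiv> jacobian f (at p)"
  assumes "J $ 3 $ 1 = 0" "J $ 3 $ 2 = 0" "J $ 3 $ 3 < 0" "J $ 1 $ 2 * J $ 2 $ 1 = 0"
    and "J $ 1 $ 1 < 0" "J $ 2 $ 2 < 0"
  shows "lin_stable f p"
  using assms by (intro lin_stable_block_3) (auto intro: mult_neg_neg)

lemma lin_unstable_block_3:
  fixes f :: "real^3 \<Rightarrow> real^3" and p :: "real^3"
  defines "J \<equiv> jacobian f (at p)"
  assumes "J $ 3 $ 1 = 0" "J $ 3 $ 2 = 0" "J $ 1 $ 2 * J $ 2 $ 1 = 0"
    and "J $ 1 $ 1 > 0 \<or> J $ 2 $ 2 > 0"
  shows "lin_unstable f p"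
proof -
  from assms(5) obtain r where "0 < r" "r = J $ 1 $ 1 \<or> r = J $ 2 $ 2" by blast
  then have "cpx_eigenvalue J (of_real r) \<and> Re (of_real r) > 0"
    unfolding cpx_eigenvalue_block_3[OF assms(2,3)] using assms(4) by auto
  then show ?thesis unfolding lin_unstable_def J_def by blast
qed

locale sis_behaviour =
  fixes \<alpha> \<beta>u \<beta>p \<gamma> cP L cIU cIP :: real
  assumes \<alpha>_pos: "0 < \<alpha>" and \<alpha>_less_1: "\<alpha> < 1" and \<beta>p_pos: "0 < \<beta>p" and \<gamma>_pos: "0 < \<gamma>"
    and cP_pos: "0 < cP" and L_pos: "0 < L" and cIP_less_cIU: "cIP < cIU"
begin

abbreviation F :: "real^3 \<Rightarrow> real^3" where
  "F \<equiv> sis_field \<alpha> \<beta>u \<beta>p \<gamma> cP L cIU cIP"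

definition y_u :: real where "y_u = 1 - \<gamma> / \<beta>p"
definition y_int :: real where "y_int = cP / (L * (1 - \<alpha>) * \<beta>p)"
definition y_p :: real where "y_p = 1 - \<gamma> / (\<alpha> * \<beta>p)"
definition zS_int :: real where "zS_int = (\<gamma> / (\<beta>p * (1 - y_int)) - \<alpha>) / (1 - \<alpha>)"

lemma F_plane:
  "F (vec3 y z 0) =
     vec3 (((1 - y) * (z + \<alpha> * (1 - z)) * \<beta>p - \<gamma>) * y) (z * (1 - z) * (cP - L * (1 - \<alpha>) * \<beta>p * y)) 0"
  unfolding sis_field_def Let_def by simp

lemmas jacobian_F_plane = jacobian_sis_field_plane[of \<alpha> \<beta>u \<beta>p \<gamma> cP L cIU cIP]

lemma y_int_pos: "0 < y_int"
  unfolding y_int_def using \<alpha>_less_1 \<beta>p_pos cP_pos L_pos by simp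

lemma less_y_int_iff: "y < y_int \<longleftrightarrow> L * (1 - \<alpha>) * \<beta>p * y < cP"
  and y_int_less_iff: "y_int < y \<longleftrightarrow> cP < L * (1 - \<alpha>) * \<beta>p * y"
  unfolding y_int_def using \<alpha>_less_1 \<beta>p_pos L_pos by (simp_all add: field_simps)

lemma E0_equilibrium_unstable: "equilibrium F (vec3 0 0 0) \<and> lin_unstable F (vec3 0 0 0)"
  by (auto simp: equilibrium_def F_plane jacobian_F_plane cP_pos intro!: lin_unstable_block_3)

lemma E1_equilibrium_stability:
  "equilibrium F (vec3 0 1 0)
   \<and> (\<beta>p < \<gamma> \<longrightarrow> lin_stable F (vec3 0 1 0))
   \<and> (\<beta>p > \<gamma> \<longrightarrow> lin_unstable F (vec3 0 1 0))"
  using cP_pos cIP_less_cIU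
  by (auto simp: equilibrium_def F_plane jacobian_F_plane
           intro!: lin_stable_block_3_triangular lin_unstable_block_3)

lemma E2_equilibrium_stability:
  "equilibrium F (vec3 y_u 1 0)
   \<and> ((0 < y_u \<and> y_u \<le> 1) \<longleftrightarrow> \<beta>p > \<gamma>)
   \<and> (\<beta>p > \<gamma> \<and> y_u < y_int \<longrightarrow> lin_stable F (vec3 y_u 1 0))
   \<and> (\<beta>p > \<gamma> \<and> y_u > y_int \<longrightarrow> lin_unstable F (vec3 y_u 1 0))"
proof (intro conjI impI)
  have y_u: "(1 - y_u) * \<beta>p = \<gamma>"
    unfolding y_u_def using \<beta>p_pos by (simp add: field_simps)
  have J: "jacobian F (at (vec3 y_u 1 0)) $ 1 $ 1 = - \<beta>p * y_u"
    "jacobian F (at (vec3 y_u 1 0)) $ 2 $ 2 = L * (1 - \<alpha>) * \<beta>p * y_u - cP"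
    using y_u by (simp_all add: jacobian_F_plane algebra_simps)
  show "equilibrium F (vec3 y_u 1 0)"
    using y_u by (simp add: equilibrium_def F_plane)
  show "(0 < y_u \<and> y_u \<le> 1) \<longleftrightarrow> \<beta>p > \<gamma>"
    unfolding y_u_def using \<beta>p_pos \<gamma>_pos by (simp add: field_simps)
  show "lin_stable F (vec3 y_u 1 0)" if "\<beta>p > \<gamma> \<and> y_u < y_int"
  proof (rule lin_stable_block_3_triangular)
    have "0 < y_u" unfolding y_u_def using that \<beta>p_pos by (simp add: field_simps)
    then show "jacobian F (at (vec3 y_u 1 0)) $ 1 $ 1 < 0" unfolding J using \<beta>p_pos by simp
    show "jacobian F (at (vec3 y_u 1 0)) $ 2 $ 2 < 0" unfolding J using that less_y_int_iff by simp
  qed (use cIP_less_cIU in \<open>simp_all add: jacobian_F_plane\<close>)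
  show "lin_unstable F (vec3 y_u 1 0)" if "\<beta>p > \<gamma> \<and> y_u > y_int"
    using that y_int_less_iff[of y_u] by (intro lin_unstable_block_3) (simp_all add: J jacobian_F_plane)
qed

lemma y_u_less_1: "y_u < 1"
  unfolding y_u_def using \<beta>p_pos \<gamma>_pos by simp

lemma zS_int_mix: "zS_int + \<alpha> * (1 - zS_int) = \<gamma> / (\<beta>p * (1 - y_int))"
proof -
  have "(1 - \<alpha>) * zS_int = \<gamma> / (\<beta>p * (1 - y_int)) - \<alpha>"
    unfolding zS_int_def using \<alpha>_less_1 by simp
  then show ?thesis by (simp add: algebra_simps)
qed

lemma
  assumes "y_int < 1"
  shows zS_int_pos_iff: "0 < zS_int \<longleftrightarrow> y_p < y_int"
    and zS_int_less_1_iff: "zS_int < 1 \<longleftrightarrow> y_int < y_u"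
proof -
  define q where "q = \<gamma> / (\<beta>p * (1 - y_int))"
  have zS_int: "zS_int = (q - \<alpha>) / (1 - \<alpha>)" unfolding zS_int_def q_def ..
  have "0 < \<beta>p * (1 - y_int)" using assms \<beta>p_pos by simp
  then have "\<alpha> < q \<longleftrightarrow> y_p < y_int" and "q < 1 \<longleftrightarrow> y_int < y_u"
    unfolding q_def y_p_def y_u_def using \<alpha>_pos \<beta>p_pos by (simp_all add: field_simps)
  then show "0 < zS_int \<longleftrightarrow> y_p < y_int" and "zS_int < 1 \<longleftrightarrow> y_int < y_u"
    unfolding zS_int using \<alpha>_less_1 by (simp_all add: field_simps)
qed

lemma E3_existence_stability:
  "((0 < y_int \<and> y_int < 1 \<and> 0 < zS_int \<and> zS_int < 1) \<longleftrightarrow> (y_p < y_int \<and> y_int < y_u))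
   \<and> (y_p < y_int \<and> y_int < y_u \<longrightarrow>
        equilibrium F (vec3 y_int zS_int 0) \<and> lin_stable F (vec3 y_int zS_int 0))"
proof (intro conjI impI)
  show "(0 < y_int \<and> y_int < 1 \<and> 0 < zS_int \<and> zS_int < 1) \<longleftrightarrow> (y_p < y_int \<and> y_int < y_u)"
    using zS_int_pos_iff zS_int_less_1_iff y_int_pos y_u_less_1 by auto
  assume between: "y_p < y_int \<and> y_int < y_u"
  then have y_int: "y_int < 1" using y_u_less_1 by simp
  have zS_int: "0 < zS_int" "zS_int < 1"
    using between zS_int_pos_iff[OF y_int] zS_int_less_1_iff[OF y_int] by auto
  have mix_pos: "0 < zS_int + \<alpha> * (1 - zS_int)"
    using zS_int \<alpha>_pos by (simp add: add_pos_nonneg)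
  have mix: "(1 - y_int) * (zS_int + \<alpha> * (1 - zS_int)) * \<beta>p = \<gamma>"
    unfolding zS_int_mix using y_int \<beta>p_pos by simp
  have cP: "cP = L * (1 - \<alpha>) * \<beta>p * y_int"
    unfolding y_int_def using \<alpha>_less_1 \<beta>p_pos L_pos by simp
  show "equilibrium F (vec3 y_int zS_int 0)"
    using mix cP by (simp add: equilibrium_def F_plane)
  define J where "J = jacobian F (at (vec3 y_int zS_int 0))"
  have J11: "J $ 1 $ 1 = - ((zS_int + \<alpha> * (1 - zS_int)) * \<beta>p * y_int)"
    and J22: "J $ 2 $ 2 = 0"
    unfolding J_def jacobian_F_plane using mix cP by (simp_all add: algebra_simps)
  have J11_neg: "J $ 1 $ 1 < 0"
    unfolding J11 using mix_pos \<beta>p_pos y_int_pos by simp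
  have "J $ 1 $ 2 > 0" and "J $ 2 $ 1 < 0"
    unfolding J_def jacobian_F_plane using y_int y_int_pos zS_int \<alpha>_less_1 \<beta>p_pos L_pos
    by (simp_all add: mult_pos_pos mult_pos_neg)
  then have J12_J21_neg: "J $ 1 $ 2 * J $ 2 $ 1 < 0"
    by (rule mult_pos_neg)
  have J3: "J $ 3 $ 1 = 0" "J $ 3 $ 2 = 0" "J $ 3 $ 3 < 0"
    unfolding J_def jacobian_F_plane using cIP_less_cIU by simp_all
  show "lin_stable F (vec3 y_int zS_int 0)"
    using lin_stable_block_3[of F "vec3 y_int zS_int 0", folded J_def] J3 J11_neg J12_J21_neg J22
    by simp
qed

lemma E4_equilibrium_stability:
  "equilibrium F (vec3 y_p 0 0)
   \<and> ((0 < y_p \<and> y_p < 1) \<longleftrightarrow> \<gamma> < \<alpha> * \<beta>p)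
   \<and> (y_p > y_int \<longrightarrow> lin_stable F (vec3 y_p 0 0))
   \<and> (y_p < y_int \<longrightarrow> lin_unstable F (vec3 y_p 0 0))"
proof (intro conjI impI)
  have y_p: "(1 - y_p) * (\<alpha> * \<beta>p) = \<gamma>"
    unfolding y_p_def using \<alpha>_pos \<beta>p_pos by (simp add: field_simps)
  have J: "jacobian F (at (vec3 y_p 0 0)) $ 1 $ 1 = - \<alpha> * \<beta>p * y_p"
    "jacobian F (at (vec3 y_p 0 0)) $ 2 $ 2 = cP - L * (1 - \<alpha>) * \<beta>p * y_p"
    using y_p by (simp_all add: jacobian_F_plane algebra_simps)
  show "equilibrium F (vec3 y_p 0 0)"
    using y_p by (simp add: equilibrium_def F_plane algebra_simps)
  show "(0 < y_p \<and> y_p < 1) \<longleftrightarrow> \<gamma> < \<alpha> * \<beta>p"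
    unfolding y_p_def using \<alpha>_pos \<beta>p_pos \<gamma>_pos by (simp add: field_simps)
  show "lin_stable F (vec3 y_p 0 0)" if "y_p > y_int"
  proof (rule lin_stable_block_3_triangular)
    have "0 < y_p" using that y_int_pos by linarith
    then show "jacobian F (at (vec3 y_p 0 0)) $ 1 $ 1 < 0" unfolding J using \<alpha>_pos \<beta>p_pos by simp
    show "jacobian F (at (vec3 y_p 0 0)) $ 2 $ 2 < 0" unfolding J using that y_int_less_iff by simp
  qed (use cIP_less_cIU in \<open>simp_all add: jacobian_F_plane\<close>)
  show "lin_unstable F (vec3 y_p 0 0)" if "y_p < y_int"
    using that less_y_int_iff[of y_p] by (intro lin_unstable_block_3) (simp_all add: J jacobian_F_plane)
qed

end

theorem proposition1:
  fixes \<alpha> \<beta>u \<beta>p \<gamma> cP L cIU cIP :: real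
  assumes "0 < \<alpha>" "\<alpha> < 1" "0 < \<beta>p" "\<beta>p < \<beta>u" "0 < \<gamma>" "0 < cP" "0 < L"
    and "0 \<le> cIP" "cIP < cIU"
  defines "F \<equiv> sis_field \<alpha> \<beta>u \<beta>p \<gamma> cP L cIU cIP"
    and "yu \<equiv> 1 - \<gamma> / \<beta>p"
    and "yint \<equiv> cP / (L * (1 - \<alpha>) * \<beta>p)"
    and "yp \<equiv> 1 - \<gamma> / (\<alpha> * \<beta>p)"
    and "zSint \<equiv> (1 / (1 - \<alpha>)) * (\<gamma> / (\<beta>p * (1 - cP / (L * (1 - \<alpha>) * \<beta>p))) - \<alpha>)"
  shows
    "(equilibrium F (vec3 0 0 0) \<and> lin_unstable F (vec3 0 0 0))
     \<and> (equilibrium F (vec3 0 1 0)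
        \<and> (\<beta>p < \<gamma> \<longrightarrow> lin_stable F (vec3 0 1 0))
        \<and> (\<beta>p > \<gamma> \<longrightarrow> lin_unstable F (vec3 0 1 0)))
     \<and> (equilibrium F (vec3 yu 1 0)
        \<and> ((0 < yu \<and> yu \<le> 1) \<longleftrightarrow> \<beta>p > \<gamma>)
        \<and> (\<beta>p > \<gamma> \<and> yu < yint \<longrightarrow> lin_stable F (vec3 yu 1 0))
        \<and> (\<beta>p > \<gamma> \<and> yu > yint \<longrightarrow> lin_unstable F (vec3 yu 1 0)))
     \<and> (((0 < yint \<and> yint < 1 \<and> 0 < zSint \<and> zSint < 1) \<longleftrightarrow> (yp < yint \<and> yint < yu))
        \<and> (yp < yint \<and> yint < yu \<longrightarrow>
             equilibrium F (vec3 yint zSint 0) \<and> lin_stable F (vec3 yint zSint 0)))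
     \<and> (equilibrium F (vec3 yp 0 0)
        \<and> ((0 < yp \<and> yp < 1) \<longleftrightarrow> \<gamma> < \<alpha> * \<beta>p)
        \<and> (yp > yint \<longrightarrow> lin_stable F (vec3 yp 0 0))
        \<and> (yp < yint \<longrightarrow> lin_unstable F (vec3 yp 0 0)))"
proof -
  interpret sis_behaviour \<alpha> \<beta>u \<beta>p \<gamma> cP L cIU cIP
    using assms by unfold_locales
  have "yu = y_u" "yint = y_int" "yp = y_p" "zSint = zS_int"
    unfolding yu_def yint_def yp_def zSint_def y_u_def y_int_def y_p_def zS_int_def by simp_all
  then show ?thesis
    unfolding F_def using E0_equilibrium_unstable E1_equilibrium_stability E2_equilibrium_stability
      E3_existence_stability E4_equilibrium_stability
    by simp
qed

end
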